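(* For every integer $p\ge 3$, $$\mu(S_p^2)=\begin{cases}\frac{(p+1)^2}{4}, & p\text{ odd},\\ \frac{p(p+2)}{4}, & p\text{ even},\end{cases}\qquad \#\mu(S_p^2)=\begin{cases}\binom{p}{(p+1)/2}, & p\text{ odd},\\ \binom{p+1}{(p+2)/2}, & p\text{ even}.\end{cases}$$
   Context: For $p\ge3$, $n\ge1$, the Sierpiński graph $S_p^n$ has vertex set $\{0,1,\dots,p-1\}^n$, a vertex $(i_1,\dots,i_n)$ written $i_1\cdots i_n$; vertices $i_1\cdots i_n$ and $j_1\cdots j_n$ are adjacent iff there is $h\in\{1,\dots,n\}$ with $i_t=j_t$ for all $t<h$, $i_h\ne j_h$, and $i_t=j_h$, $j_t=i_h$ for all $t>h$. For $X\subseteq V(G)$, vertices $u,v$ are $X$-visible if there exists a shortest $u,v$-path $P$ with $V(P)\cap X\subseteq\{u,v\}$; $X$ is a mutual-visibility set if every two vertices of $X$ are $X$-visible; $\mu(G)$ is the maximum size of a mutual-visibility set, and $\#\mu(G)$ is the number of mutual-visibility sets of size $\mu(G)$. *)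

theory Defs
  imports Main
begin

text \<open>Vertices of S_p^n: words of length n over the alphabet {0,...,p-1}, as lists
  (the list index i corresponds to position i+1 of the word).\<close>

definition sierp_vertices :: "nat \<Rightarrow> nat \<Rightarrow> nat list set" where
  "sierp_vertices p n = {w. length w = n \<and> set w \<subseteq> {0..<p}}"

definition sierp_adj :: "nat \<Rightarrow> nat \<Rightarrow> nat list \<Rightarrow> nat list \<Rightarrow> bool" where
  "sierp_adj p n u v \<longleftrightarrow> u \<in> sierp_vertices p n \<and> v \<in> sierp_vertices p n \<and>
     (\<exists>h<n. (\<forall>t<h. u ! t = v ! t) \<and> u ! h \<noteq> v ! h \<and>
            (\<forall>t. h < t \<and> t < n \<longrightarrow> u ! t = v ! h \<and> v ! t = u ! h))"

definition is_walk :: "'a set \<Rightarrow> ('a \<Rightarrow> 'a \<Rightarrow> bool) \<Rightarrow> 'a list \<Rightarrow> bool" where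
  "is_walk V E P \<longleftrightarrow> P \<noteq> [] \<and> set P \<subseteq> V \<and> (\<forall>i. Suc i < length P \<longrightarrow> E (P ! i) (P ! Suc i))"

definition walk_between :: "'a set \<Rightarrow> ('a \<Rightarrow> 'a \<Rightarrow> bool) \<Rightarrow> 'a \<Rightarrow> 'a \<Rightarrow> 'a list \<Rightarrow> bool" where
  "walk_between V E u v P \<longleftrightarrow> is_walk V E P \<and> hd P = u \<and> last P = v"

text \<open>Graph distance (number of edges of a shortest walk); only used for connected graphs.\<close>

definition gdist :: "'a set \<Rightarrow> ('a \<Rightarrow> 'a \<Rightarrow> bool) \<Rightarrow> 'a \<Rightarrow> 'a \<Rightarrow> nat" where
  "gdist V E u v = (LEAST k. \<exists>P. walk_between V E u v P \<and> length P = Suc k)"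

text \<open>A shortest u,v-path: a u,v-walk with exactly gdist edges (such a walk is a path).\<close>

definition shortest_path :: "'a set \<Rightarrow> ('a \<Rightarrow> 'a \<Rightarrow> bool) \<Rightarrow> 'a \<Rightarrow> 'a \<Rightarrow> 'a list \<Rightarrow> bool" where
  "shortest_path V E u v P \<longleftrightarrow> walk_between V E u v P \<and> length P = Suc (gdist V E u v)"

definition X_visible :: "'a set \<Rightarrow> ('a \<Rightarrow> 'a \<Rightarrow> bool) \<Rightarrow> 'a set \<Rightarrow> 'a \<Rightarrow> 'a \<Rightarrow> bool" where
  "X_visible V E X u v \<longleftrightarrow> (\<exists>P. shortest_path V E u v P \<and> set P \<inter> X \<subseteq> {u, v})"

definition mutual_visibility_set :: "'a set \<Rightarrow> ('a \<Rightarrow> 'a \<Rightarrow> bool) \<Rightarrow> 'a set \<Rightarrow> bool" where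
  "mutual_visibility_set V E X \<longleftrightarrow> X \<subseteq> V \<and> (\<forall>u\<in>X. \<forall>v\<in>X. X_visible V E X u v)"

definition mu :: "'a set \<Rightarrow> ('a \<Rightarrow> 'a \<Rightarrow> bool) \<Rightarrow> nat" where
  "mu V E = Max (card ` {X. mutual_visibility_set V E X})"

definition num_mu :: "'a set \<Rightarrow> ('a \<Rightarrow> 'a \<Rightarrow> bool) \<Rightarrow> nat" where
  "num_mu V E = card {X. mutual_visibility_set V E X \<and> card X = mu V E}"

end

theory Submission
  imports Defs
begin

(* Write ij for the vertex [i, j]: it lies in the i-th copy of K_p, and the only edge between
   copies i and k is the bridge ik -- ki. A shortest path between ij and kl (i \<noteq> k) therefore
   runs ij, ik, ki, kl, except that for j = l there is a second one ij, ji, jk, kj through copy j.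
   For a mutual-visibility set X let s be the number of copies i whose row {j. ij \<in> X} is
   nonempty. Visibility through the bridges forces every such row into the p - s letters of
   empty copies together with i itself (up to one degenerate configuration obeying the same
   bound), so |X| \<le> s (p + 1 - s) \<le> \<lfloor>(p + 1)^2 / 4\<rfloor>. Equality forces s = \<lfloor>(p + 1)/2\<rfloor>
   or s = \<lfloor>(p + 2)/2\<rfloor> and all rows to be full, so maximum sets correspond exactly to the
   s-subsets of the alphabet, which gives the binomial count. *)

lemma is_walk_singleton [simp]: "is_walk V E [x] \<longleftrightarrow> x \<in> V"
  by (simp add: is_walk_def)

lemma is_walk_Cons_Cons [simp]:
  "is_walk V E (x # y # P) \<longleftrightarrow> x \<in> V \<and> E x y \<and> is_walk V E (y # P)"
  unfolding is_walk_def by (auto simp: nth_Cons split: nat.splits)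

lemma square_sum_div_4:
  fixes s t :: nat
  shows "(s + t)^2 div 4 = s * t + (max s t - min s t)^2 div 4"
proof -
  have key: "(a + (a + d))^2 div 4 = a * (a + d) + d^2 div 4" for a d :: nat
  proof -
    have "(a + (a + d))^2 = 4 * (a * (a + d)) + d^2"
      by (simp add: power2_eq_square algebra_simps)
    then show ?thesis by simp
  qed
  show ?thesis
  proof (cases "s \<le> t")
    case True
    then obtain d where "t = s + d" using le_Suc_ex by blast
    then show ?thesis using key[of s d] by simp
  next
    case False
    then obtain d where "s = t + d" using le_Suc_ex[of t s] by auto
    then show ?thesis using key[of t d] by (simp add: add.commute mult.commute)
  qed
qed

lemma mult_diff_le_square_div_4:
  fixes s n :: nat
  shows "s * (n - s) \<le> n^2 div 4"
proof (cases "s \<le> n")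
  case True
  then show ?thesis using square_sum_div_4[of s "n - s"] by simp
qed simp

lemma mult_diff_eq_square_div_4_iff:
  fixes s n :: nat
  assumes "s \<le> n"
  shows "s * (n - s) = n^2 div 4 \<longleftrightarrow> s = n div 2 \<or> s = (n + 1) div 2"
proof -
  define d where "d = max s (n - s) - min s (n - s)"
  have "s * (n - s) = n^2 div 4 \<longleftrightarrow> d^2 div 4 = 0"
    using square_sum_div_4[of s "n - s"] assms by (simp add: d_def)
  also have "\<dots> \<longleftrightarrow> d \<le> 1"
  proof
    assume "d^2 div 4 = 0"
    then have "d^2 < 2^2" by simp
    then show "d \<le> 1" using power_less_imp_less_base by fastforce
  qed (auto simp: le_Suc_eq)
  also have "\<dots> \<longleftrightarrow> s = n div 2 \<or> s = (n + 1) div 2"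
    using assms unfolding d_def by (auto simp: max_def min_def)
  finally show ?thesis .
qed

lemma shortest_pathI:
  assumes "walk_between V E u v P" and "\<And>Q. walk_between V E u v Q \<Longrightarrow> length P \<le> length Q"
  shows "shortest_path V E u v P"
proof -
  obtain m where m: "length P = Suc m"
    using assms(1) by (cases P) (auto simp: walk_between_def is_walk_def)
  have "gdist V E u v = m" unfolding gdist_def
  proof (rule Least_equality)
    show "\<exists>P. walk_between V E u v P \<and> length P = Suc m" using assms(1) m by blast
  next
    fix k assume "\<exists>Q. walk_between V E u v Q \<and> length Q = Suc k"
    then show "m \<le> k" using assms(2) m by fastforce
  qed
  then show ?thesis using assms(1) m by (simp add: shortest_path_def)
qed

lemma shortest_path_length_le:
  assumes "shortest_path V E u v P" and "walk_between V E u v Q"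
  shows "length P \<le> length Q"
proof -
  obtain m where m: "length Q = Suc m"
    using assms(2) by (cases Q) (auto simp: walk_between_def is_walk_def)
  have "gdist V E u v \<le> m" unfolding gdist_def
    by (rule Least_le) (use assms(2) m in blast)
  then show ?thesis using assms(1) m by (simp add: shortest_path_def)
qed

abbreviation "V2 p \<equiv> sierp_vertices p 2"
abbreviation "E2 p \<equiv> sierp_adj p 2"

lemma sierp2_vertex_iff: "x \<in> V2 p \<longleftrightarrow> (\<exists>i j. x = [i, j] \<and> i < p \<and> j < p)"
  unfolding sierp_vertices_def by (auto simp: length_Suc_conv numeral_2_eq_2)

lemma sierp2_adj_iff:
  "E2 p [i, j] [k, l] \<longleftrightarrow> i < p \<and> j < p \<and> k < p \<and> l < p \<and>
     (i = k \<and> j \<noteq> l \<or> i \<noteq> k \<and> j = k \<and> l = i)"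
proof -
  have ex_less_2: "(\<exists>h<2. P h) \<longleftrightarrow> P 0 \<or> P 1" for P :: "nat \<Rightarrow> bool"
    by (auto simp: less_2_cases_iff)
  show ?thesis
    unfolding sierp_adj_def ex_less_2 by (auto simp: sierp2_vertex_iff less_2_cases_iff)
qed

lemma finite_sierp2_vertices: "finite (V2 p)"
proof -
  have "V2 p \<subseteq> (\<lambda>(i, j). [i, j]) ` ({0..<p} \<times> {0..<p})"
    by (force simp: sierp2_vertex_iff)
  then show ?thesis by (rule finite_subset) simp
qed

definition bridge_path :: "nat \<Rightarrow> nat \<Rightarrow> nat \<Rightarrow> nat \<Rightarrow> nat list list" where
  "bridge_path i j k l =
     [i, j] # (if j \<noteq> k then [[i, k]] else []) @ [[k, i]] @ (if l \<noteq> i then [[k, l]] else [])"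

lemma list_length_le_4_cases:
  assumes "xs \<noteq> []" and "length xs \<le> 4"
  obtains a where "xs = [a]" | a b where "xs = [a, b]" | a b c where "xs = [a, b, c]"
    | a b c d where "xs = [a, b, c, d]"
proof -
  have "length xs = 1 \<or> length xs = 2 \<or> length xs = 3 \<or> length xs = 4"
    using assms by (cases "length xs") (auto simp: numeral_eq_Suc)
  then show ?thesis using that by (auto simp: length_Suc_conv numeral_eq_Suc)
qed

lemma sierp2_short_walk_cases:
  assumes "i \<noteq> k" and "walk_between (V2 p) (E2 p) [i, j] [k, l] Q"
    and "length Q \<le> length (bridge_path i j k l)"
  shows "Q = bridge_path i j k l \<or> j = l \<and> j \<noteq> i \<and> j \<noteq> k \<and> Q = [[i, j], [j, i], [j, k], [k, j]]"
proof -
  have "Q \<noteq> []" using assms(2) by (simp add: walk_between_def is_walk_def)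
  moreover have "length Q \<le> 4"
    using assms(3) by (simp add: bridge_path_def split: if_splits)
  ultimately show ?thesis
  proof (cases rule: list_length_le_4_cases)
    case (1 a)
    then show ?thesis using assms by (auto simp: walk_between_def)
  next
    case (2 a b)
    then show ?thesis using assms
      by (auto simp: walk_between_def sierp2_adj_iff sierp2_vertex_iff bridge_path_def)
  next
    case (3 a b c)
    then obtain x y where "b = [x, y]"
      using assms(2) by (auto simp: walk_between_def sierp2_vertex_iff)
    with 3 show ?thesis using assms
      by (auto simp: walk_between_def sierp2_adj_iff bridge_path_def split: if_splits)
  next
    case (4 a b c d)
    then obtain x y z w where "b = [x, y]" "c = [z, w]"
      using assms(2) by (auto simp: walk_between_def sierp2_vertex_iff)
    with 4 show ?thesis using assms
      by (auto simp: walk_between_def sierp2_adj_iff bridge_path_def split: if_splits)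
  qed
qed

lemma walk_between_bridge_path:
  assumes "i < p" "j < p" "k < p" "l < p" "i \<noteq> k"
  shows "walk_between (V2 p) (E2 p) [i, j] [k, l] (bridge_path i j k l)"
  using assms by (auto simp: walk_between_def bridge_path_def sierp2_vertex_iff sierp2_adj_iff)

lemma shortest_path_bridge_path:
  assumes "i < p" "j < p" "k < p" "l < p" "i \<noteq> k"
  shows "shortest_path (V2 p) (E2 p) [i, j] [k, l] (bridge_path i j k l)"
proof (rule shortest_pathI)
  show "walk_between (V2 p) (E2 p) [i, j] [k, l] (bridge_path i j k l)"
    using walk_between_bridge_path[OF assms] .
  fix Q assume Q: "walk_between (V2 p) (E2 p) [i, j] [k, l] Q"
  show "length (bridge_path i j k l) \<le> length Q"
  proof (rule ccontr)
    assume "\<not> length (bridge_path i j k l) \<le> length Q"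
    then show False
      using sierp2_short_walk_cases[OF assms(5) Q] by (auto simp: bridge_path_def)
  qed
qed

lemma sierp2_shortest_path_cases:
  assumes "i < p" "j < p" "k < p" "l < p" "i \<noteq> k"
    and "shortest_path (V2 p) (E2 p) [i, j] [k, l] P"
  shows "P = bridge_path i j k l \<or> j = l \<and> j \<noteq> i \<and> j \<noteq> k \<and> P = [[i, j], [j, i], [j, k], [k, j]]"
proof -
  have "walk_between (V2 p) (E2 p) [i, j] [k, l] P"
    using assms(6) by (simp add: shortest_path_def)
  moreover have "length P \<le> length (bridge_path i j k l)"
    using shortest_path_length_le[OF assms(6) walk_between_bridge_path[OF assms(1-5)]] .
  ultimately show ?thesis using sierp2_short_walk_cases[OF assms(5)] by blast
qed

lemma sierp2_shortest_path_same_copy: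
  assumes "i < p" "j < p" "l < p"
  shows "\<exists>P. shortest_path (V2 p) (E2 p) [i, j] [i, l] P \<and> set P \<subseteq> {[i, j], [i, l]}"
proof -
  have "shortest_path (V2 p) (E2 p) [i, j] [i, l] (remdups [[i, j], [i, l]])"
  proof (rule shortest_pathI)
    show "walk_between (V2 p) (E2 p) [i, j] [i, l] (remdups [[i, j], [i, l]])"
      using assms by (auto simp: walk_between_def sierp2_vertex_iff sierp2_adj_iff)
    fix Q assume "walk_between (V2 p) (E2 p) [i, j] [i, l] Q"
    then show "length (remdups [[i, j], [i, l]]) \<le> length Q"
      by (cases Q) (auto simp: walk_between_def is_walk_def Suc_le_eq)
  qed
  then show ?thesis by (intro exI[of _ "remdups [[i, j], [i, l]]"]) auto
qed

lemma mutual_visibility_set_sierp2_subset: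
  "mutual_visibility_set (V2 p) (E2 p) X \<Longrightarrow> X \<subseteq> V2 p"
  by (simp add: mutual_visibility_set_def)

lemma mutual_visibility_set_bridge:
  assumes X: "mutual_visibility_set (V2 p) (E2 p) X"
    and "[i, j] \<in> X" "[k, l] \<in> X" "i \<noteq> k"
  shows "(j \<noteq> k \<longrightarrow> [i, k] \<notin> X) \<and> (l \<noteq> i \<longrightarrow> [k, i] \<notin> X)
    \<or> j = l \<and> j \<noteq> i \<and> j \<noteq> k \<and> [j, i] \<notin> X \<and> [j, k] \<notin> X"
proof -
  have "i < p" "j < p" "k < p" "l < p"
    using assms(2,3) mutual_visibility_set_sierp2_subset[OF X] by (auto simp: sierp2_vertex_iff)
  moreover obtain P where "shortest_path (V2 p) (E2 p) [i, j] [k, l] P"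
    and "set P \<inter> X \<subseteq> {[i, j], [k, l]}"
    using X assms(2,3) unfolding mutual_visibility_set_def X_visible_def by blast
  ultimately show ?thesis
    using sierp2_shortest_path_cases[of i p j k l P] \<open>i \<noteq> k\<close>
    by (auto simp: bridge_path_def split: if_splits)
qed

definition row :: "nat list set \<Rightarrow> nat \<Rightarrow> nat set" where
  "row X i = {j. [i, j] \<in> X}"

definition occupied :: "nat list set \<Rightarrow> nat set" where
  "occupied X = {i. row X i \<noteq> {}}"

lemma row_subset: "X \<subseteq> V2 p \<Longrightarrow> row X i \<subseteq> {0..<p}"
  by (auto simp: row_def sierp2_vertex_iff)

lemma occupied_subset: "X \<subseteq> V2 p \<Longrightarrow> occupied X \<subseteq> {0..<p}"
  by (auto simp: occupied_def row_def sierp2_vertex_iff)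

lemma finite_occupied: "X \<subseteq> V2 p \<Longrightarrow> finite (occupied X)"
  using finite_subset[OF occupied_subset] by blast

lemma card_occupied_le: "X \<subseteq> V2 p \<Longrightarrow> card (occupied X) \<le> p"
  using card_mono[OF _ occupied_subset] by fastforce

lemma sierp2_set_eqI:
  assumes "X \<subseteq> V2 p" "Y \<subseteq> V2 p" "\<And>i. row X i = row Y i"
  shows "X = Y"
proof -
  have "x \<in> X \<longleftrightarrow> x \<in> Y" if "x \<in> V2 p" for x
    using that assms(3) by (auto simp: sierp2_vertex_iff row_def set_eq_iff)
  then show ?thesis using assms(1,2) by blast
qed

lemma card_eq_sum_card_row:
  assumes "X \<subseteq> V2 p"
  shows "card X = (\<Sum>i\<in>occupied X. card (row X i))"
proof -
  have X_eq: "X = (\<lambda>(i, j). [i, j]) ` (SIGMA i:occupied X. row X i)"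
    using assms by (force simp: occupied_def row_def sierp2_vertex_iff)
  have "inj_on (\<lambda>(i, j). [i :: nat, j]) (SIGMA i:occupied X. row X i)"
    by (auto simp: inj_on_def)
  then have "card X = card (SIGMA i:occupied X. row X i)"
    by (subst X_eq) (rule card_image)
  also have "\<dots> = (\<Sum>i\<in>occupied X. card (row X i))"
    using finite_occupied[OF assms] finite_subset[OF row_subset[OF assms]] by simp
  finally show ?thesis .
qed

(* ik \<in> X blocks the bridge path from ij to any kl \<in> X when j \<noteq> k, so the detour ij, ji, jk, kj
   through copy j is needed; this leaves no room in the rows of k and j. *)
lemma row_with_occupied_letter:
  assumes X: "mutual_visibility_set (V2 p) (E2 p) X"
    and "i \<noteq> k" "k \<in> row X i" "k \<in> occupied X" "card (row X i) \<ge> 2"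
  shows "\<exists>j. j \<noteq> k \<and> row X i = {k, j} \<and> row X k = {j} \<and> row X j = {}"
proof -
  have ikX: "[i, k] \<in> X" using assms(3) by (simp add: row_def)
  have forced: "j = l \<and> [j, k] \<notin> X" if "j \<in> row X i" "j \<noteq> k" "l \<in> row X k" for j l
    using mutual_visibility_set_bridge[OF X _ _ \<open>i \<noteq> k\<close>, of j l] that ikX by (auto simp: row_def)
  have "\<not> row X i \<subseteq> {k}"
    using card_mono[of "{k}" "row X i"] assms(5) by auto
  then obtain j where j: "j \<in> row X i" "j \<noteq> k" by auto
  obtain l where l: "l \<in> row X k" using assms(4) by (auto simp: occupied_def)
  have row_k: "row X k = {j}" using forced[OF j] l by auto
  have row_i: "row X i = {k, j}" using forced row_k assms(3) j by auto
  have "i \<noteq> j"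
    using mutual_visibility_set_bridge[OF X, of i j k l] ikX row_k l forced[OF j l]
    by (auto simp: row_def)
  moreover have "[i, j] \<in> X" "[k, j] \<in> X" using row_i row_k by (auto simp: row_def)
  ultimately have "row X j = {}"
    using mutual_visibility_set_bridge[OF X ikX _ \<open>i \<noteq> j\<close>] j(2) by (auto simp: row_def)
  with row_i row_k j show ?thesis by blast
qed

lemma card_row_le:
  assumes X: "mutual_visibility_set (V2 p) (E2 p) X" and "i \<in> occupied X"
  shows "card (row X i) \<le> p + 1 - card (occupied X)"
proof -
  have XV: "X \<subseteq> V2 p" using mutual_visibility_set_sierp2_subset[OF X] .
  have fin: "finite (occupied X)" using finite_occupied[OF XV] .
  have s_le: "card (occupied X) \<le> p" using card_occupied_le[OF XV] .
  show ?thesis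
  proof (cases "row X i \<subseteq> ({0..<p} - occupied X) \<union> {i}")
    case True
    have "card (row X i) \<le> card ({0..<p} - occupied X) + card {i}"
      using card_mono[OF _ True] card_Un_le[of "{0..<p} - occupied X" "{i}"] by simp
    also have "\<dots> = p - card (occupied X) + 1"
      using occupied_subset[OF XV] fin by (simp add: card_Diff_subset)
    finally show ?thesis using s_le by simp
  next
    case False
    then obtain k where k: "k \<in> row X i" "k \<in> occupied X" "k \<noteq> i"
      using row_subset[OF XV] by auto
    show ?thesis
    proof (cases "card (row X i) \<ge> 2")
      case True
      from row_with_occupied_letter[OF X k(3)[symmetric] k(1,2) True] obtain j
        where j: "j \<noteq> k" "row X i = {k, j}" "row X j = {}" by blast
      have "j < p" using row_subset[OF XV, of i] j(2) by auto
      have "occupied X \<subseteq> {0..<p} - {j}"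
        using occupied_subset[OF XV] j(3) by (auto simp: occupied_def)
      then have "card (occupied X) \<le> p - 1"
        using card_mono[of "{0..<p} - {j}"] \<open>j < p\<close> by fastforce
      then show ?thesis using j(1,2) \<open>j < p\<close> by simp
    qed (use s_le in simp)
  qed
qed

lemma card_mutual_visibility_set_le:
  assumes X: "mutual_visibility_set (V2 p) (E2 p) X"
  shows "card X \<le> card (occupied X) * (p + 1 - card (occupied X))"
proof -
  have "card X = (\<Sum>i\<in>occupied X. card (row X i))"
    using card_eq_sum_card_row[OF mutual_visibility_set_sierp2_subset[OF X]] .
  also have "\<dots> \<le> card (occupied X) * (p + 1 - card (occupied X))"
    using sum_bounded_above[of "occupied X" "\<lambda>i. card (row X i)"] card_row_le[OF X] by simp
  finally show ?thesis .
qed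

definition canonical_set :: "nat \<Rightarrow> nat set \<Rightarrow> nat list set" where
  "canonical_set p S = {[i, j] | i j. i \<in> S \<and> j < p \<and> (j \<notin> S \<or> j = i)}"

lemma canonical_set_subset: "S \<subseteq> {0..<p} \<Longrightarrow> canonical_set p S \<subseteq> V2 p"
  by (auto simp: canonical_set_def sierp2_vertex_iff)

lemma row_canonical_set:
  "S \<subseteq> {0..<p} \<Longrightarrow> row (canonical_set p S) i = (if i \<in> S then insert i ({0..<p} - S) else {})"
  by (auto simp: row_def canonical_set_def)

lemma occupied_canonical_set: "S \<subseteq> {0..<p} \<Longrightarrow> occupied (canonical_set p S) = S"
  by (auto simp: occupied_def row_canonical_set)

lemma card_insert_diff_atLeastLessThan:
  assumes "S \<subseteq> {0..<p}" "i \<in> S"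
  shows "card (insert i ({0..<p} - S)) = p + 1 - card S"
proof -
  have "card S \<le> p" using card_mono[OF _ assms(1)] by simp
  moreover have "card (insert i ({0..<p} - S)) = card ({0..<p} - S) + 1"
    using assms(2) by simp
  moreover have "card ({0..<p} - S) = p - card S"
    using assms(1) finite_subset[OF assms(1)] by (simp add: card_Diff_subset)
  ultimately show ?thesis by simp
qed

lemma card_canonical_set:
  assumes "S \<subseteq> {0..<p}"
  shows "card (canonical_set p S) = card S * (p + 1 - card S)"
proof -
  have "card (canonical_set p S) = (\<Sum>i\<in>S. card (row (canonical_set p S) i))"
    using card_eq_sum_card_row[OF canonical_set_subset] occupied_canonical_set assms by simp
  also have "\<dots> = (\<Sum>i\<in>S. p + 1 - card S)"
    using row_canonical_set[OF assms] card_insert_diff_atLeastLessThan[OF assms] by simp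
  finally show ?thesis by simp
qed

lemma mutual_visibility_canonical_set:
  assumes S: "S \<subseteq> {0..<p}"
  shows "mutual_visibility_set (V2 p) (E2 p) (canonical_set p S)"
  unfolding mutual_visibility_set_def X_visible_def
proof (intro conjI ballI canonical_set_subset[OF S])
  fix u v assume "u \<in> canonical_set p S" "v \<in> canonical_set p S"
  then obtain i j k l where u: "u = [i, j]" "i \<in> S" "j < p" "j \<notin> S \<or> j = i"
    and v: "v = [k, l]" "k \<in> S" "l < p" "l \<notin> S \<or> l = k"
    by (auto simp: canonical_set_def)
  have "i < p" "k < p" using u(2) v(2) S by auto
  show "\<exists>P. shortest_path (V2 p) (E2 p) u v P \<and> set P \<inter> canonical_set p S \<subseteq> {u, v}"
  proof (cases "i = k")
    case True
    then show ?thesis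
      using sierp2_shortest_path_same_copy[OF \<open>i < p\<close> u(3) v(3)] u v by blast
  next
    case False
    have "set (bridge_path i j k l) \<inter> canonical_set p S \<subseteq> {u, v}"
      using u v False by (auto simp: bridge_path_def canonical_set_def)
    then show ?thesis
      using shortest_path_bridge_path[OF \<open>i < p\<close> u(3) \<open>k < p\<close> v(3) False] u v by blast
  qed
qed

lemma row_eq_insert_diff_occupied:
  assumes X: "mutual_visibility_set (V2 p) (E2 p) X"
    and rows: "\<And>i. i \<in> occupied X \<Longrightarrow> card (row X i) = p + 1 - card (occupied X)"
    and two: "p + 1 - card (occupied X) \<ge> 2"
    and "i \<in> occupied X"
  shows "row X i = insert i ({0..<p} - occupied X)"
proof (rule card_subset_eq)
  have XV: "X \<subseteq> V2 p" using mutual_visibility_set_sierp2_subset[OF X] .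
  show "finite (insert i ({0..<p} - occupied X))" by simp
  show "row X i \<subseteq> insert i ({0..<p} - occupied X)"
  proof
    fix k assume k: "k \<in> row X i"
    show "k \<in> insert i ({0..<p} - occupied X)"
    proof (rule ccontr)
      assume "k \<notin> insert i ({0..<p} - occupied X)"
      then have "k \<noteq> i" "k \<in> occupied X" using k row_subset[OF XV, of i] by auto
      then obtain j where "row X k = {j}"
        using row_with_occupied_letter[OF X _ k] rows[OF \<open>i \<in> occupied X\<close>] two by fastforce
      then show False using rows[OF \<open>k \<in> occupied X\<close>] two by simp
    qed
  qed
  show "card (row X i) = card (insert i ({0..<p} - occupied X))"
    using rows[OF \<open>i \<in> occupied X\<close>] occupied_subset[OF XV] \<open>i \<in> occupied X\<close>
      card_insert_diff_atLeastLessThan by simp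
qed

lemma maximum_mutual_visibility_set_canonical:
  assumes X: "mutual_visibility_set (V2 p) (E2 p) X"
    and card_X: "card X = (p + 1)^2 div 4" and "3 \<le> p"
  shows "X = canonical_set p (occupied X) \<and> card (occupied X) \<in> {(p + 1) div 2, (p + 2) div 2}"
proof
  have XV: "X \<subseteq> V2 p" using mutual_visibility_set_sierp2_subset[OF X] .
  define s where "s = card (occupied X)"
  have "s \<le> p" using card_occupied_le[OF XV] by (simp add: s_def)
  have s_opt: "s * (p + 1 - s) = (p + 1)^2 div 4"
    using card_mutual_visibility_set_le[OF X] mult_diff_le_square_div_4[of s "p + 1"] card_X
    by (simp add: s_def)
  then show "card (occupied X) \<in> {(p + 1) div 2, (p + 2) div 2}"
    using mult_diff_eq_square_div_4_iff[of s "p + 1"] \<open>s \<le> p\<close> by (simp add: s_def)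
  then have two: "p + 1 - s \<ge> 2" using \<open>3 \<le> p\<close> by (auto simp: s_def)
  have sum_rows: "(\<Sum>i\<in>occupied X. card (row X i)) = (\<Sum>i\<in>occupied X. p + 1 - s)"
    using card_eq_sum_card_row[OF XV] card_X s_opt by (simp add: s_def)
  have rows: "card (row X i) = p + 1 - s" if "i \<in> occupied X" for i
    by (rule sum_mono_inv[OF sum_rows _ that finite_occupied[OF XV]])
      (use card_row_le[OF X] in \<open>simp add: s_def\<close>)
  show "X = canonical_set p (occupied X)"
  proof (rule sierp2_set_eqI[OF XV canonical_set_subset[OF occupied_subset[OF XV]]])
    fix i
    show "row X i = row (canonical_set p (occupied X)) i"
    proof (cases "i \<in> occupied X")
      case True
      then show ?thesis
        using row_eq_insert_diff_occupied[OF X rows[unfolded s_def] two[unfolded s_def]]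
        by (simp add: row_canonical_set[OF occupied_subset[OF XV]])
    next
      case False
      then show ?thesis
        using row_canonical_set[OF occupied_subset[OF XV], of i] by (simp add: occupied_def)
    qed
  qed
qed

lemma mu_sierp2:
  assumes "0 < p"
  shows "mu (V2 p) (E2 p) = (p + 1)^2 div 4"
  unfolding mu_def
proof (rule Max_eqI)
  have "{X. mutual_visibility_set (V2 p) (E2 p) X} \<subseteq> Pow (V2 p)"
    by (auto simp: mutual_visibility_set_def)
  then show "finite (card ` {X. mutual_visibility_set (V2 p) (E2 p) X})"
    using finite_sierp2_vertices finite_subset by blast
next
  fix y assume "y \<in> card ` {X. mutual_visibility_set (V2 p) (E2 p) X}"
  then show "y \<le> (p + 1)^2 div 4"
    using card_mutual_visibility_set_le mult_diff_le_square_div_4 order_trans by blast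
next
  define S where "S = {0..<(p + 1) div 2}"
  have S_sub: "S \<subseteq> {0..<p}" and "card S = (p + 1) div 2"
    using assms by (auto simp: S_def)
  then have "card (canonical_set p S) = (p + 1)^2 div 4"
    using card_canonical_set[OF S_sub] mult_diff_eq_square_div_4_iff[of "card S" "p + 1"] by simp
  then show "(p + 1)^2 div 4 \<in> card ` {X. mutual_visibility_set (V2 p) (E2 p) X}"
    using mutual_visibility_canonical_set[OF S_sub] by (auto intro: rev_image_eqI)
qed

lemma card_subsets_card_mem:
  assumes "finite A" "finite K"
  shows "card {S. S \<subseteq> A \<and> card S \<in> K} = (\<Sum>k\<in>K. card A choose k)"
proof -
  have fin: "finite {S. S \<subseteq> A \<and> card S = k}" for k
    by (rule finite_subset[of _ "Pow A"]) (use assms(1) in auto)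
  have "{S. S \<subseteq> A \<and> card S \<in> K} = (\<Union>k\<in>K. {S. S \<subseteq> A \<and> card S = k})" by blast
  also have "card \<dots> = (\<Sum>k\<in>K. card {S. S \<subseteq> A \<and> card S = k})"
    by (rule card_UN_disjoint) (use assms(2) fin in auto)
  also have "\<dots> = (\<Sum>k\<in>K. card A choose k)"
    using n_subsets[OF assms(1)] by simp
  finally show ?thesis .
qed

lemma num_mu_sierp2:
  assumes "3 \<le> p"
  shows "num_mu (V2 p) (E2 p) = (\<Sum>k\<in>{(p + 1) div 2, (p + 2) div 2}. p choose k)"
proof -
  define F where "F = {S. S \<subseteq> {0..<p} \<and> card S \<in> {(p + 1) div 2, (p + 2) div 2}}"
  have card_opt: "card (canonical_set p S) = (p + 1)^2 div 4" if "S \<in> F" for S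
    using that card_canonical_set mult_diff_eq_square_div_4_iff[of "card S" "p + 1"]
    by (auto simp: F_def)
  have "{X. mutual_visibility_set (V2 p) (E2 p) X \<and> card X = (p + 1)^2 div 4} = canonical_set p ` F"
  proof (intro equalityI subsetI)
    fix X assume "X \<in> {X. mutual_visibility_set (V2 p) (E2 p) X \<and> card X = (p + 1)^2 div 4}"
    then have X: "mutual_visibility_set (V2 p) (E2 p) X" "card X = (p + 1)^2 div 4" by auto
    then show "X \<in> canonical_set p ` F"
      using maximum_mutual_visibility_set_canonical[OF X \<open>3 \<le> p\<close>]
        occupied_subset[OF mutual_visibility_set_sierp2_subset[OF X(1)]]
      unfolding F_def by blast
  qed (use mutual_visibility_canonical_set card_opt in \<open>auto simp: F_def\<close>)
  moreover have "inj_on (canonical_set p) F"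
    by (rule inj_on_inverseI[where g = occupied]) (auto simp: F_def occupied_canonical_set)
  ultimately have "num_mu (V2 p) (E2 p) = card F"
    using assms by (simp add: num_mu_def mu_sierp2 card_image)
  also have "\<dots> = (\<Sum>k\<in>{(p + 1) div 2, (p + 2) div 2}. p choose k)"
    unfolding F_def by (subst card_subsets_card_mem) simp_all
  finally show ?thesis .
qed

lemma square_succ_div_4_even:
  fixes p :: nat
  assumes "even p"
  shows "(p + 1)^2 div 4 = p * (p + 2) div 4"
proof -
  obtain m where p: "p = 2 * m" using assms by (auto elim: evenE)
  have "(p + 1)^2 = 4 * (m * (m + 1)) + 1" "p * (p + 2) = 4 * (m * (m + 1))"
    unfolding p by (simp_all add: power2_eq_square algebra_simps)
  then show ?thesis by simp
qed

theorem theorem3p1: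
  fixes p :: nat
  assumes "p \<ge> 3"
  shows "mu (sierp_vertices p 2) (sierp_adj p 2) =
           (if odd p then (p + 1)^2 div 4 else p * (p + 2) div 4)
       \<and> num_mu (sierp_vertices p 2) (sierp_adj p 2) =
           (if odd p then p choose ((p + 1) div 2) else (p + 1) choose ((p + 2) div 2))"
proof
  show "mu (V2 p) (E2 p) = (if odd p then (p + 1)^2 div 4 else p * (p + 2) div 4)"
    using mu_sierp2 assms square_succ_div_4_even by simp
  show "num_mu (V2 p) (E2 p) =
      (if odd p then p choose ((p + 1) div 2) else (p + 1) choose ((p + 2) div 2))"
  proof (cases "odd p")
    case True
    then have "(p + 2) div 2 = (p + 1) div 2" by presburger
    with True show ?thesis using num_mu_sierp2[OF assms] by simp
  next
    case False
    then have "(p + 1) div 2 = p div 2" "(p + 2) div 2 = Suc (p div 2)" by presburger+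
    with False show ?thesis using num_mu_sierp2[OF assms] by simp
  qed
qed

end
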